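(* Let $V$ be a finite set with nonnegative symmetric similarity scores $w_{ij}$ ($i\ne j$) satisfying the triangle inequality $w_{ij}\le w_{ik}+w_{kj}$ for all distinct $i,j,k\in V$. For a rooted binary tree $T$ whose leaves are in bijection with $V$, let $cost_T(V)=\sum_{\{i,j\}\subseteq V}w_{ij}\,|\mathrm{leaves}(T[i\vee j])|$. Then for every such tree $T$, $cost_T(V)\le 2\min_{T'}cost_{T'}(V)$, the minimum being over all such trees $T'$.
   Context: $T[i\vee j]$ denotes the subtree of $T$ rooted at the least common ancestor of the leaves $i$ and $j$, and $|\mathrm{leaves}(T[i\vee j])|$ is its number of leaves. The sum is over unordered pairs of distinct elements. *)

theory Defs
  imports Complex_Main
begin

datatype 'a bintree = Leaf 'a | Node "'a bintree" "'a bintree"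

fun leaves :: "'a bintree \<Rightarrow> 'a list" where
  "leaves (Leaf x) = [x]"
| "leaves (Node l r) = leaves l @ leaves r"

definition tree_on :: "'a bintree \<Rightarrow> 'a set \<Rightarrow> bool" where
  "tree_on T V \<longleftrightarrow> distinct (leaves T) \<and> set (leaves T) = V"

fun lca_subtree :: "'a bintree \<Rightarrow> 'a \<Rightarrow> 'a \<Rightarrow> 'a bintree" where
  "lca_subtree (Leaf x) i j = Leaf x"
| "lca_subtree (Node l r) i j =
     (if i \<in> set (leaves l) \<and> j \<in> set (leaves l) then lca_subtree l i j
      else if i \<in> set (leaves r) \<and> j \<in> set (leaves r) then lca_subtree r i j
      else Node l r)"

text \<open>An unordered pair e = {i,j} contributes the term for
  (i,j) with i,j its two elements (both summands are symmetric in i,j on a tree_on tree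
  when w is symmetric; we pick an ordering via SOME).\<close>
definition pair_term :: "('a \<Rightarrow> 'a \<Rightarrow> real) \<Rightarrow> 'a bintree \<Rightarrow> 'a set \<Rightarrow> real" where
  "pair_term w T e = (SOME c. \<exists>i j. e = {i, j} \<and> i \<noteq> j \<and>
        c = w i j * real (length (leaves (lca_subtree T i j))))"

definition cost :: "('a \<Rightarrow> 'a \<Rightarrow> real) \<Rightarrow> 'a bintree \<Rightarrow> 'a set \<Rightarrow> real" where
  "cost w T V = (\<Sum>e\<in>{e. e \<subseteq> V \<and> card e = 2}. pair_term w T e)"

end

theory Submission
  imports Defs
begin

text \<open>Charging the cost of a pair \<open>{i,j}\<close> to each leaf \<open>k\<close> below \<open>T[i \<or> j]\<close> turns \<open>2 cost\<^sub>T(V)\<close>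
  into a sum over triples \<open>(i,j,k)\<close>. Of three distinct leaves, the pair with the lowest lca has
  the third leaf outside it, while the lca of each of the other two pairs contains all three.
  So in any tree the three rotations of a triple contribute at most \<open>w\<^sub>i\<^sub>j + w\<^sub>i\<^sub>k + w\<^sub>j\<^sub>k\<close> and
  at least the sum of two of these weights, which by the triangle inequality is at least half
  of all three.\<close>

lemma lca_subtree_commute: "lca_subtree T i j = lca_subtree T j i"
  by (induction T) (auto simp: conj_commute)

lemma set_leaves_lca_subtree_subset: "set (leaves (lca_subtree T i j)) \<subseteq> set (leaves T)"
  by (induction T) auto

lemma mem_leaves_lca_subtree:
  "i \<in> set (leaves T) \<Longrightarrow> j \<in> set (leaves T) \<Longrightarrow> i \<in> set (leaves (lca_subtree T i j))"
  by (induction T) auto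

lemma distinct_leaves_lca_subtree: "distinct (leaves T) \<Longrightarrow> distinct (leaves (lca_subtree T i j))"
  by (induction T) auto

lemma lca_subtree_outside_triple:
  assumes "distinct (leaves T)" "i \<in> set (leaves T)" "j \<in> set (leaves T)" "k \<in> set (leaves T)"
    and "k \<notin> set (leaves (lca_subtree T i j))"
  shows "j \<in> set (leaves (lca_subtree T i k)) \<and> i \<in> set (leaves (lca_subtree T j k))"
  using assms
proof (induction T)
  case (Node l r)
  then have "set (leaves l) \<inter> set (leaves r) = {}" by auto
  with Node show ?case
    by (auto simp: mem_leaves_lca_subtree lca_subtree_commute[of _ k] split: if_splits)
qed simp

definition lca_weight :: "('a \<Rightarrow> 'a \<Rightarrow> real) \<Rightarrow> 'a bintree \<Rightarrow> 'a \<Rightarrow> 'a \<Rightarrow> 'a \<Rightarrow> real" where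
  "lca_weight w T i j k = (if i \<noteq> j \<and> k \<in> set (leaves (lca_subtree T i j)) then w i j else 0)"

lemma sum_lca_weight:
  assumes "finite V" "tree_on T V" "i \<in> V" "j \<in> V"
  shows "(\<Sum>k\<in>V. lca_weight w T i j k)
       = (if i \<noteq> j then w i j * real (length (leaves (lca_subtree T i j))) else 0)"
proof (cases "i = j")
  case False
  let ?S = "set (leaves (lca_subtree T i j))"
  have "?S \<subseteq> V"
    using set_leaves_lca_subtree_subset[of T i j] assms(2) by (auto simp: tree_on_def)
  then have "(\<Sum>k\<in>V. lca_weight w T i j k) = (\<Sum>k\<in>?S. w i j)"
    using False assms(1) by (simp add: lca_weight_def sum.If_cases Int_absorb1)
  moreover have "length (leaves (lca_subtree T i j)) = card ?S"
    using distinct_leaves_lca_subtree assms(2) by (metis distinct_card tree_on_def)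
  ultimately show ?thesis using False by simp
qed (simp add: lca_weight_def)

lemma pair_term_doubleton:
  assumes "\<And>i j. i \<in> V \<Longrightarrow> j \<in> V \<Longrightarrow> i \<noteq> j \<Longrightarrow> w i j = w j i"
    and "a \<in> V" "b \<in> V" "a \<noteq> b"
  shows "pair_term w T {a, b} = w a b * real (length (leaves (lca_subtree T a b)))"
  unfolding pair_term_def
proof (rule some_equality)
  fix c assume "\<exists>i j. {a, b} = {i, j} \<and> i \<noteq> j \<and> c = w i j * real (length (leaves (lca_subtree T i j)))"
  then show "c = w a b * real (length (leaves (lca_subtree T a b)))"
    using assms by (auto simp: doubleton_eq_iff lca_subtree_commute)
qed (use assms in blast)

lemma sum_off_diagonal_doubletons:
  fixes g :: "'a set \<Rightarrow> 'b :: comm_semiring_1"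
  assumes "finite V"
  shows "(\<Sum>i\<in>V. \<Sum>j\<in>V. if i \<noteq> j then g {i, j} else 0) = 2 * (\<Sum>e\<in>{e. e \<subseteq> V \<and> card e = 2}. g e)"
proof -
  let ?P = "{p \<in> V \<times> V. fst p \<noteq> snd p}" and ?E = "{e. e \<subseteq> V \<and> card e = 2}"
  have "finite ?E" using assms by (auto intro: finite_subset[of _ "Pow V"])
  have "(\<Sum>i\<in>V. \<Sum>j\<in>V. if i \<noteq> j then g {i, j} else 0) = (\<Sum>p\<in>?P. g {fst p, snd p})"
    using assms by (simp add: sum.cartesian_product case_prod_beta sum.inter_filter)
  also have "\<dots> = (\<Sum>e\<in>?E. \<Sum>p\<in>{p \<in> ?P. {fst p, snd p} = e}. g {fst p, snd p})"
    using assms \<open>finite ?E\<close> by (intro sum.group[symmetric]) (auto simp: card_2_iff)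
  also have "\<dots> = (\<Sum>e\<in>?E. 2 * g e)"
  proof (rule sum.cong[OF refl])
    fix e assume "e \<in> ?E"
    then obtain a b where e: "e = {a, b}" "a \<noteq> b" "a \<in> V" "b \<in> V" by (auto simp: card_2_iff)
    then have "{p \<in> ?P. {fst p, snd p} = e} = {(a, b), (b, a)}" by (auto simp: doubleton_eq_iff)
    then show "(\<Sum>p\<in>{p \<in> ?P. {fst p, snd p} = e}. g {fst p, snd p}) = 2 * g e"
      using e by (simp add: insert_commute mult_2)
  qed
  finally show ?thesis by (simp add: sum_distrib_left)
qed

lemma sum_lca_weight_eq_twice_cost:
  assumes "finite V" "tree_on T V"
    and "\<And>i j. i \<in> V \<Longrightarrow> j \<in> V \<Longrightarrow> i \<noteq> j \<Longrightarrow> w i j = w j i"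
  shows "(\<Sum>i\<in>V. \<Sum>j\<in>V. \<Sum>k\<in>V. lca_weight w T i j k) = 2 * cost w T V"
proof -
  have "(\<Sum>i\<in>V. \<Sum>j\<in>V. \<Sum>k\<in>V. lca_weight w T i j k)
      = (\<Sum>i\<in>V. \<Sum>j\<in>V. if i \<noteq> j then pair_term w T {i, j} else 0)"
    using assms by (intro sum.cong refl) (simp add: sum_lca_weight pair_term_doubleton[OF assms(3)])
  then show ?thesis using assms(1) by (simp add: sum_off_diagonal_doubletons cost_def)
qed

lemma sum_rotations:
  fixes g :: "'a \<Rightarrow> 'a \<Rightarrow> 'a \<Rightarrow> 'b :: comm_semiring_1"
  shows "(\<Sum>i\<in>A. \<Sum>j\<in>A. \<Sum>k\<in>A. g i j k + g i k j + g j k i)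
       = 3 * (\<Sum>i\<in>A. \<Sum>j\<in>A. \<Sum>k\<in>A. g i j k)"
proof -
  have "(\<Sum>i\<in>A. \<Sum>j\<in>A. \<Sum>k\<in>A. g j k i) = (\<Sum>j\<in>A. \<Sum>i\<in>A. \<Sum>k\<in>A. g j k i)"
    by (rule sum.swap)
  also have "\<dots> = (\<Sum>i\<in>A. \<Sum>j\<in>A. \<Sum>k\<in>A. g i j k)"
    by (intro sum.cong refl sum.swap)
  finally have "(\<Sum>i\<in>A. \<Sum>j\<in>A. \<Sum>k\<in>A. g j k i) = (\<Sum>i\<in>A. \<Sum>j\<in>A. \<Sum>k\<in>A. g i j k)" .
  moreover have "(\<Sum>i\<in>A. \<Sum>j\<in>A. \<Sum>k\<in>A. g i k j) = (\<Sum>i\<in>A. \<Sum>j\<in>A. \<Sum>k\<in>A. g i j k)"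
    by (intro sum.cong refl sum.swap)
  moreover have "x + x + x = 3 * x" for x :: 'b
    by (metis add.assoc distrib_right mult_1 mult_2 numeral_Bit1 numeral_One)
  ultimately show ?thesis by (simp add: sum.distrib)
qed

lemma lca_weight_rotations_upper:
  assumes "\<And>i j. i \<in> V \<Longrightarrow> j \<in> V \<Longrightarrow> i \<noteq> j \<Longrightarrow> w i j \<ge> 0"
    and "i \<in> V" "j \<in> V" "k \<in> V" "i \<noteq> j" "i \<noteq> k" "j \<noteq> k"
  shows "lca_weight w T i j k + lca_weight w T i k j + lca_weight w T j k i \<le> w i j + w i k + w j k"
  using assms by (auto simp: lca_weight_def)

lemma lca_weight_rotations_lower:
  assumes T: "tree_on T V"
    and nonneg: "\<And>i j. i \<in> V \<Longrightarrow> j \<in> V \<Longrightarrow> i \<noteq> j \<Longrightarrow> w i j \<ge> 0"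
    and sym: "\<And>i j. i \<in> V \<Longrightarrow> j \<in> V \<Longrightarrow> i \<noteq> j \<Longrightarrow> w i j = w j i"
    and triangle: "\<And>i j k. i \<in> V \<Longrightarrow> j \<in> V \<Longrightarrow> k \<in> V \<Longrightarrow> i \<noteq> j \<Longrightarrow> i \<noteq> k \<Longrightarrow> j \<noteq> k
           \<Longrightarrow> w i j \<le> w i k + w k j"
    and ijk: "i \<in> V" "j \<in> V" "k \<in> V" "i \<noteq> j" "i \<noteq> k" "j \<noteq> k"
  shows "w i j + w i k + w j k \<le> 2 * (lca_weight w T i j k + lca_weight w T i k j + lca_weight w T j k i)"
proof -
  let ?under = "\<lambda>a b c. c \<in> set (leaves (lca_subtree T a b))"
  have outside: "?under a c b \<and> ?under b c a" if "a \<in> V" "b \<in> V" "c \<in> V" "\<not> ?under a b c" for a b c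
    using lca_subtree_outside_triple[of T a b c] T that by (simp add: tree_on_def)
  have "\<not> ?under i j k \<Longrightarrow> ?under i k j \<and> ?under j k i"
    using outside[of i j k] ijk by blast
  moreover have "\<not> ?under i k j \<Longrightarrow> ?under i j k \<and> ?under j k i"
    using outside[of i k j] ijk by (simp add: lca_subtree_commute[of T k j])
  moreover have "\<not> ?under j k i \<Longrightarrow> ?under i j k \<and> ?under i k j"
    using outside[of j k i] ijk by (simp add: lca_subtree_commute[of T k i] lca_subtree_commute[of T j i])
  ultimately have separated:
    "?under i j k \<and> ?under i k j \<or> ?under i j k \<and> ?under j k i \<or> ?under i k j \<and> ?under j k i"
    by blast
  have "w k j = w j k" "w j i = w i j"
    using sym[of k j] sym[of j i] ijk by simp_all
  then have triangles: "w i j \<le> w i k + w j k" "w i k \<le> w i j + w j k" "w j k \<le> w i j + w i k"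
    using triangle[of i j k] triangle[of i k j] triangle[of j k i] ijk by simp_all
  show ?thesis
    using separated triangles nonneg[of i j] nonneg[of i k] nonneg[of j k] ijk
    by (auto simp: lca_weight_def)
qed

lemma lca_weight_endpoints:
  assumes "tree_on T V" "i \<in> V" "j \<in> V"
  shows "lca_weight w T i j i = (if i \<noteq> j then w i j else 0)"
    and "lca_weight w T i j j = (if i \<noteq> j then w i j else 0)"
    and "lca_weight w T i i j = 0"
  using assms mem_leaves_lca_subtree[of i T j] mem_leaves_lca_subtree[of j T i]
  by (auto simp: lca_weight_def tree_on_def lca_subtree_commute)

lemma lca_weight_rotations_le:
  assumes T: "tree_on T V" and T': "tree_on T' V"
    and nonneg: "\<And>i j. i \<in> V \<Longrightarrow> j \<in> V \<Longrightarrow> i \<noteq> j \<Longrightarrow> w i j \<ge> 0"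
    and sym: "\<And>i j. i \<in> V \<Longrightarrow> j \<in> V \<Longrightarrow> i \<noteq> j \<Longrightarrow> w i j = w j i"
    and triangle: "\<And>i j k. i \<in> V \<Longrightarrow> j \<in> V \<Longrightarrow> k \<in> V \<Longrightarrow> i \<noteq> j \<Longrightarrow> i \<noteq> k \<Longrightarrow> j \<noteq> k
           \<Longrightarrow> w i j \<le> w i k + w k j"
    and ijk: "i \<in> V" "j \<in> V" "k \<in> V"
  shows "lca_weight w T i j k + lca_weight w T i k j + lca_weight w T j k i
       \<le> 2 * (lca_weight w T' i j k + lca_weight w T' i k j + lca_weight w T' j k i)"
proof (cases "i \<noteq> j \<and> i \<noteq> k \<and> j \<noteq> k")
  case True
  then have distinct: "i \<noteq> j" "i \<noteq> k" "j \<noteq> k" by auto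
  have "lca_weight w T i j k + lca_weight w T i k j + lca_weight w T j k i \<le> w i j + w i k + w j k"
    by (rule lca_weight_rotations_upper[OF nonneg ijk distinct])
  also have "\<dots> \<le> 2 * (lca_weight w T' i j k + lca_weight w T' i k j + lca_weight w T' j k i)"
    by (rule lca_weight_rotations_lower[OF T' nonneg sym triangle ijk distinct])
  finally show ?thesis .
next
  case False
  text \<open>A triple with a repeated leaf contributes the same amount in every tree.\<close>
  then consider "i = j" | "i = k" | "j = k" by blast
  then show ?thesis
    by cases (use ijk nonneg[of i j] nonneg[of j i] nonneg[of i k] nonneg[of j k] in
        \<open>auto simp: lca_weight_endpoints[OF T] lca_weight_endpoints[OF T']\<close>)
qed

lemma cost_le_twice_cost:
  assumes "finite V" "tree_on T V" "tree_on T' V"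
    and "\<And>i j. i \<in> V \<Longrightarrow> j \<in> V \<Longrightarrow> i \<noteq> j \<Longrightarrow> w i j \<ge> 0"
    and "\<And>i j. i \<in> V \<Longrightarrow> j \<in> V \<Longrightarrow> i \<noteq> j \<Longrightarrow> w i j = w j i"
    and "\<And>i j k. i \<in> V \<Longrightarrow> j \<in> V \<Longrightarrow> k \<in> V \<Longrightarrow> i \<noteq> j \<Longrightarrow> i \<noteq> k \<Longrightarrow> j \<noteq> k
           \<Longrightarrow> w i j \<le> w i k + w k j"
  shows "cost w T V \<le> 2 * cost w T' V"
proof -
  have "(\<Sum>i\<in>V. \<Sum>j\<in>V. \<Sum>k\<in>V. lca_weight w T i j k + lca_weight w T i k j + lca_weight w T j k i)
      \<le> (\<Sum>i\<in>V. \<Sum>j\<in>V. \<Sum>k\<in>V. 2 * (lca_weight w T' i j k + lca_weight w T' i k j + lca_weight w T' j k i))"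
    by (intro sum_mono lca_weight_rotations_le[OF assms(2-6)])
  then show ?thesis
    by (simp add: sum_rotations sum_lca_weight_eq_twice_cost[OF assms(1) _ assms(5)]
        assms(2,3) flip: sum_distrib_left)
qed

lemma leaves_nonempty: "leaves T \<noteq> []"
  by (induction T) auto

lemma finite_bintrees_bounded_leaves:
  assumes "finite V"
  shows "finite {T. set (leaves T) \<subseteq> V \<and> length (leaves T) \<le> n}"
proof (induction n)
  case 0
  show ?case by (simp add: leaves_nonempty)
next
  case (Suc n)
  let ?S = "{T. set (leaves T) \<subseteq> V \<and> length (leaves T) \<le> n}"
  have "T \<in> Leaf ` V \<union> case_prod Node ` (?S \<times> ?S)"
    if "set (leaves T) \<subseteq> V" "length (leaves T) \<le> Suc n" for T
  proof (cases T)
    case (Node l r)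
    have "0 < length (leaves l)" "0 < length (leaves r)"
      by (simp_all add: leaves_nonempty)
    moreover have "length (leaves l) + length (leaves r) \<le> Suc n"
      using that Node by simp
    ultimately have "length (leaves l) \<le> n" "length (leaves r) \<le> n"
      by linarith+
    with that Node have "(l, r) \<in> ?S \<times> ?S" by auto
    with Node show ?thesis by force
  qed (use that in auto)
  then have "{T. set (leaves T) \<subseteq> V \<and> length (leaves T) \<le> Suc n}
      \<subseteq> Leaf ` V \<union> case_prod Node ` (?S \<times> ?S)"
    by blast
  then show ?case
    using Suc assms by (auto intro: finite_subset)
qed

lemma finite_tree_on:
  assumes "finite V"
  shows "finite {T. tree_on T V}"
proof -
  have "{T. tree_on T V} \<subseteq> {T. set (leaves T) \<subseteq> V \<and> length (leaves T) \<le> card V}"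
    by (auto simp: tree_on_def distinct_card[symmetric])
  then show ?thesis
    using finite_bintrees_bounded_leaves[OF assms] by (rule finite_subset)
qed

theorem mainTheorem14:
  fixes V :: "'a set" and w :: "'a \<Rightarrow> 'a \<Rightarrow> real" and T :: "'a bintree"
  assumes "finite V"
    and "\<And>i j. i \<in> V \<Longrightarrow> j \<in> V \<Longrightarrow> i \<noteq> j \<Longrightarrow> w i j \<ge> 0"
    and "\<And>i j. i \<in> V \<Longrightarrow> j \<in> V \<Longrightarrow> i \<noteq> j \<Longrightarrow> w i j = w j i"
    and "\<And>i j k. i \<in> V \<Longrightarrow> j \<in> V \<Longrightarrow> k \<in> V \<Longrightarrow> i \<noteq> j \<Longrightarrow> i \<noteq> k \<Longrightarrow> j \<noteq> k
           \<Longrightarrow> w i j \<le> w i k + w k j"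
    and "tree_on T V"
  shows "cost w T V \<le> 2 * Min {cost w T' V | T'. tree_on T' V}"
proof -
  have "finite {cost w T' V | T'. tree_on T' V}"
    using finite_tree_on[OF assms(1)] by (simp add: setcompr_eq_image)
  moreover have "{cost w T' V | T'. tree_on T' V} \<noteq> {}"
    using assms(5) by auto
  ultimately have "Min {cost w T' V | T'. tree_on T' V} \<in> {cost w T' V | T'. tree_on T' V}"
    by (rule Min_in)
  then obtain T' where T': "tree_on T' V" and min: "Min {cost w T' V | T'. tree_on T' V} = cost w T' V"
    by auto
  have "cost w T V \<le> 2 * cost w T' V"
    by (rule cost_le_twice_cost[OF assms(1,5) T' assms(2-4)])
  with min show ?thesis by simp
qed

end
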